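(* Assume $d_0\delta>2$, and let $\varepsilon_0=\frac{d_0}2-\frac1\delta>0$ and $t=\frac{d_0}{2}$. Let $G=(L\cup R,E)$ be a $(c,d,\alpha,\delta)$-bipartite expander with $L=[n]$, $C_0\subseteq\mathbb{F}_2^d$ a linear code of minimum distance $d_0$, $x\in\mathbb{F}_2^n$ and $y\in T(G,C_0)$ with $d_H(x,y)\le\alpha n$, and $F=F(x,y)$. For $q\in W$, let $P_q$ be the set of $i\in[n]$ such that $p_i=q$ at the end of $\mathsf{DeterFlip}(x,q)$. Then there exists $q\in W\setminus\{0\}$ such that $|P_q\cap F|-|P_q\setminus F|\ge\frac{\varepsilon_0\delta}{2ct^2}|F|$.
   Context: A bipartite graph is $(c,d)$-regular if left degrees are $c$ and right degrees $d$; $N(S)$ is the neighborhood of $S$. A $(c,d,\alpha,\delta)$-bipartite expander ($\alpha,\delta\in(0,1]$) is a $(c,d)$-regular bipartite graph with $|N(S)|\ge\delta c|S|$ for all $S\subseteq L$, $|S|\le\alpha|L|$. Tanner code: $L=[n]$, for each $v\in R$ a fixed ordering of $N(v)$ defines $x_{N(v)}\in\mathbb{F}_2^d$, and $T(G,C_0)=\{x:x_{N(v)}\in C_0\ \forall v\in R\}$. $F(x,y)=\{i\in[n]:x_i\ne y_i\}$; $d_H$ is Hamming distance. $\mathsf{Decode}(z)$ is the codeword of $C_0$ closest to $z\in\mathbb{F}_2^d$, ties broken lexicographically. $W=\{\frac{i}{cd_0}:i\in\mathbb{Z},0\le i\le cd_0\}$. $\mathsf{DeterFlip}(x,q)$ for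 $q\in\mathbb{R}$: set $p_1=\dots=p_n=0$; for each $v\in R$, let $w_v=\mathsf{Decode}(x_{N(v)})$; if $1\le d_H(w_v,x_{N(v)})<t$, let $i$ be the smallest element of $N(v)$ where $w_v$ and $x_{N(v)}$ differ and increase $p_i$ by $\frac{t-d_H(w_v,x_{N(v)})}{ct}$; then flip every $x_i$ with $p_i=q$ and return the result. *)

theory Defs
  imports Main "HOL.Real"
begin

section \<open>Binary words (elements of F_2^d represented as bool lists, F_2 = bool with xor)\<close>

definition hdist :: "bool list \<Rightarrow> bool list \<Rightarrow> nat" where
  "hdist u w = card {j. j < length u \<and> u ! j \<noteq> w ! j}"

definition lex_le :: "bool list \<Rightarrow> bool list \<Rightarrow> bool" where
  "lex_le u w \<longleftrightarrow> u = w \<or> (u, w) \<in> lexord {(a, b). a < b}"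

definition linear_code :: "nat \<Rightarrow> bool list set \<Rightarrow> bool" where
  "linear_code d C0 \<longleftrightarrow> C0 \<subseteq> {w. length w = d} \<and> replicate d False \<in> C0 \<and>
     (\<forall>u\<in>C0. \<forall>w\<in>C0. map2 (\<noteq>) u w \<in> C0)"

definition min_dist :: "bool list set \<Rightarrow> nat \<Rightarrow> bool" where
  "min_dist C0 d0 \<longleftrightarrow> (\<exists>u\<in>C0. \<exists>w\<in>C0. u \<noteq> w \<and> hdist u w = d0) \<and>
     (\<forall>u\<in>C0. \<forall>w\<in>C0. u \<noteq> w \<longrightarrow> d0 \<le> hdist u w)"

definition Decode :: "bool list set \<Rightarrow> bool list \<Rightarrow> bool list" where
  "Decode C0 z = (THE w. w \<in> C0 \<and> (\<forall>u\<in>C0. hdist w z \<le> hdist u z) \<and>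
      (\<forall>u\<in>C0. hdist u z = hdist w z \<longrightarrow> lex_le w u))"

section \<open>Bipartite graphs with L = [n] = {1..n}; nbr v is the fixed ordering of N(v)\<close>

definition bipartite_regular :: "nat \<Rightarrow> 'r set \<Rightarrow> ('r \<Rightarrow> nat list) \<Rightarrow> nat \<Rightarrow> nat \<Rightarrow> bool" where
  "bipartite_regular n R nbr c d \<longleftrightarrow> finite R \<and> 0 < c \<and> 0 < d \<and>
     (\<forall>v\<in>R. length (nbr v) = d \<and> distinct (nbr v) \<and> set (nbr v) \<subseteq> {1..n}) \<and>
     (\<forall>i\<in>{1..n}. card {v\<in>R. i \<in> set (nbr v)} = c)"

definition nbhd :: "'r set \<Rightarrow> ('r \<Rightarrow> nat list) \<Rightarrow> nat set \<Rightarrow> 'r set" where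
  "nbhd R nbr S = {v\<in>R. \<exists>i\<in>S. i \<in> set (nbr v)}"

definition bip_expander ::
  "nat \<Rightarrow> 'r set \<Rightarrow> ('r \<Rightarrow> nat list) \<Rightarrow> nat \<Rightarrow> nat \<Rightarrow> real \<Rightarrow> real \<Rightarrow> bool" where
  "bip_expander n R nbr c d \<alpha> \<delta> \<longleftrightarrow> bipartite_regular n R nbr c d \<and>
     0 < \<alpha> \<and> \<alpha> \<le> 1 \<and> 0 < \<delta> \<and> \<delta> \<le> 1 \<and>
     (\<forall>S. S \<subseteq> {1..n} \<longrightarrow> real (card S) \<le> \<alpha> * real n \<longrightarrow>
          real (card (nbhd R nbr S)) \<ge> \<delta> * real c * real (card S))"

definition local_view :: "('r \<Rightarrow> nat list) \<Rightarrow> (nat \<Rightarrow> bool) \<Rightarrow> 'r \<Rightarrow> bool list" where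
  "local_view nbr x v = map x (nbr v)"

definition tanner_code :: "'r set \<Rightarrow> ('r \<Rightarrow> nat list) \<Rightarrow> bool list set \<Rightarrow> (nat \<Rightarrow> bool) set" where
  "tanner_code R nbr C0 = {y. \<forall>v\<in>R. local_view nbr y v \<in> C0}"

definition diffset :: "nat \<Rightarrow> (nat \<Rightarrow> bool) \<Rightarrow> (nat \<Rightarrow> bool) \<Rightarrow> nat set" where
  "diffset n x y = {i\<in>{1..n}. x i \<noteq> y i}"

definition loc_err :: "('r \<Rightarrow> nat list) \<Rightarrow> bool list set \<Rightarrow> (nat \<Rightarrow> bool) \<Rightarrow> 'r \<Rightarrow> nat" where
  "loc_err nbr C0 x v = hdist (Decode C0 (local_view nbr x v)) (local_view nbr x v)"

definition first_diff :: "('r \<Rightarrow> nat list) \<Rightarrow> bool list set \<Rightarrow> (nat \<Rightarrow> bool) \<Rightarrow> 'r \<Rightarrow> nat" where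
  "first_diff nbr C0 x v = Min {nbr v ! j | j. j < length (nbr v) \<and>
       Decode C0 (local_view nbr x v) ! j \<noteq> x (nbr v ! j)}"

text \<open>The final values p_i of DeterFlip(x,q) (they do not depend on q).\<close>
definition deter_p :: "'r set \<Rightarrow> ('r \<Rightarrow> nat list) \<Rightarrow> nat \<Rightarrow> bool list set \<Rightarrow> real \<Rightarrow>
    (nat \<Rightarrow> bool) \<Rightarrow> nat \<Rightarrow> real" where
  "deter_p R nbr c C0 t x i =
     (\<Sum>v\<in>{v\<in>R. 1 \<le> loc_err nbr C0 x v \<and> real (loc_err nbr C0 x v) < t \<and>
                   first_diff nbr C0 x v = i}.
        (t - real (loc_err nbr C0 x v)) / (real c * t))"

definition deter_flip :: "nat \<Rightarrow> 'r set \<Rightarrow> ('r \<Rightarrow> nat list) \<Rightarrow> nat \<Rightarrow> bool list set \<Rightarrow> real \<Rightarrow>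
    (nat \<Rightarrow> bool) \<Rightarrow> real \<Rightarrow> (nat \<Rightarrow> bool)" where
  "deter_flip n R nbr c C0 t x q =
     (\<lambda>i. if i \<in> {1..n} \<and> deter_p R nbr c C0 t x i = q then \<not> x i else x i)"

definition Pset :: "nat \<Rightarrow> 'r set \<Rightarrow> ('r \<Rightarrow> nat list) \<Rightarrow> nat \<Rightarrow> bool list set \<Rightarrow> real \<Rightarrow>
    (nat \<Rightarrow> bool) \<Rightarrow> real \<Rightarrow> nat set" where
  "Pset n R nbr c C0 t x q = {i\<in>{1..n}. deter_p R nbr c C0 t x i = q}"

definition Wset :: "nat \<Rightarrow> nat \<Rightarrow> real set" where
  "Wset c d0 = {real i / real (c * d0) | i. i \<le> c * d0}"

end

theory Submission
  imports Defs
begin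

text \<open>
  Every check v that votes in DeterFlip sends the weight (t - l_v)/(c t) = (d0 - 2 l_v)/(c d0) to
  a single coordinate, and at most c checks see a coordinate, so all p_i lie in W. Summing
  q (|P_q \<inter> F| - |P_q - F|) over q therefore gives the total vote, each vote counted with
  sign +1 if it lands in F and -1 otherwise. A check with 1 \<le> e_v = |N(v) \<inter> F| < t decodes
  to y, so it votes exactly (t - e_v)/(c t) for a coordinate of F; a check with e_v \<ge> t either
  does not vote or decodes wrongly, and then d0 \<le> l_v + e_v makes its signed vote at least
  (t - e_v)/(c t). Summing over N(F), with \<Sum> e_v = c |F| and |N(F)| \<ge> \<delta> c |F|, the signed
  total is at least (\<delta> t - 1) |F| / t, and since W - {0} has at most c d0 elements, all in
  (0, 1], one of them attains the bound.
\<close>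

lemma hdist_commute: "length u = length w \<Longrightarrow> hdist u w = hdist w u"
  unfolding hdist_def by metis

lemma hdist_triangle:
  assumes "length u = length w" "length z = length w"
  shows "hdist u w \<le> hdist u z + hdist z w"
proof -
  have "hdist u w \<le> card ({j. j < length u \<and> u ! j \<noteq> z ! j} \<union> {j. j < length z \<and> z ! j \<noteq> w ! j})"
    unfolding hdist_def using assms by (intro card_mono) auto
  also have "\<dots> \<le> hdist u z + hdist z w" unfolding hdist_def by (rule card_Un_le)
  finally show ?thesis .
qed

lemma hdist_pos:
  assumes "length u = length w" "u \<noteq> w"
  shows "0 < hdist u w"
proof -
  obtain j where "j < length u" "u ! j \<noteq> w ! j" using assms nth_equalityI by blast
  then show ?thesis unfolding hdist_def by (auto simp: card_gt_0_iff)
qed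

lemma hdist_map_map:
  assumes "distinct ns"
  shows "hdist (map y ns) (map x ns) = card (set ns \<inter> {i. x i \<noteq> y i})"
proof -
  let ?J = "{j. j < length (map y ns) \<and> map y ns ! j \<noteq> map x ns ! j}"
  have "set ns \<inter> {i. x i \<noteq> y i} = nth ns ` ?J" by (auto simp: in_set_conv_nth)
  moreover have "inj_on (nth ns) ?J" by (rule inj_on_nth[OF assms]) auto
  ultimately show ?thesis unfolding hdist_def by (simp add: card_image)
qed

lemma min_dist_le_hdist_add:
  assumes "min_dist C0 d0" "u \<in> C0" "w \<in> C0" "u \<noteq> w"
    and "length u = length z" "length w = length z"
  shows "d0 \<le> hdist u z + hdist w z"
proof -
  have "d0 \<le> hdist u w" using assms(1-4) by (auto simp: min_dist_def)
  also have "\<dots> \<le> hdist u z + hdist z w" using assms(5,6) by (intro hdist_triangle) auto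
  finally show ?thesis using assms(6) by (simp add: hdist_commute)
qed

lemma lex_le_antisym: "lex_le u w \<Longrightarrow> lex_le w u \<Longrightarrow> u = w"
proof (rule ccontr)
  let ?lt = "lexord {(a, b::bool). a < b}"
  assume "lex_le u w" "lex_le w u" "u \<noteq> w"
  then have "(u, w) \<in> ?lt" "(w, u) \<in> ?lt" by (auto simp: lex_le_def)
  moreover have "trans {(a, b::bool). a < b}" by (auto simp: trans_def)
  ultimately have "(u, u) \<in> ?lt" using lexord_trans by blast
  moreover have "(u, u) \<notin> ?lt" by (rule lexord_irreflexive) auto
  ultimately show False by blast
qed

lemma wf_less_bool: "wf {(a, b::bool). a < b}"
proof -
  have "{(a, b::bool). a < b} = {(False, True)}" by auto
  then show ?thesis by (simp add: wf_insert)
qed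

lemma Decode_ex1:
  assumes "C0 \<subseteq> {w. length w = d}" "C0 \<noteq> {}"
  shows "\<exists>!w. w \<in> C0 \<and> (\<forall>u\<in>C0. hdist w z \<le> hdist u z) \<and>
      (\<forall>u\<in>C0. hdist u z = hdist w z \<longrightarrow> lex_le w u)"
proof -
  obtain w0 where w0: "w0 \<in> C0" "\<forall>u. u \<in> C0 \<longrightarrow> hdist w0 z \<le> hdist u z"
    using ex_has_least_nat[of "\<lambda>w. w \<in> C0" _ "\<lambda>w. hdist w z"] assms(2) by blast
  define M where "M = {w\<in>C0. hdist w z = hdist w0 z}"
  have "w0 \<in> M" using w0 by (auto simp: M_def)
  then obtain m where m: "m \<in> M" "\<forall>u. (u, m) \<in> lex {(a, b::bool). a < b} \<longrightarrow> u \<notin> M"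
    using wf_less_bool[THEN wf_lex] unfolding wf_eq_minimal by metis
  have m_spec: "m \<in> C0 \<and> (\<forall>u\<in>C0. hdist m z \<le> hdist u z) \<and>
      (\<forall>u\<in>C0. hdist u z = hdist m z \<longrightarrow> lex_le m u)"
  proof (intro conjI ballI impI)
    show "m \<in> C0" using m by (auto simp: M_def)
    fix u assume u: "u \<in> C0"
    show "hdist m z \<le> hdist u z" using m w0 u by (auto simp: M_def)
    assume "hdist u z = hdist m z"
    then have uM: "u \<in> M" using m u by (auto simp: M_def)
    have "total (lexord {(a, b::bool). a < b})" by (rule total_lexord) (auto simp: total_on_def)
    then have "u = m \<or> (u, m) \<in> lexord {(a, b). a < b} \<or> (m, u) \<in> lexord {(a, b). a < b}"
      by (auto simp: total_on_def)
    moreover have "length u = length m" using uM m assms(1) by (auto simp: M_def)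
    then have "(u, m) \<notin> lexord {(a, b). a < b}" using m(2) uM by (auto simp: lexord_lex)
    ultimately show "lex_le m u" by (auto simp: lex_le_def)
  qed
  show ?thesis
  proof (rule ex1I[of _ m])
    fix w assume w: "w \<in> C0 \<and> (\<forall>u\<in>C0. hdist w z \<le> hdist u z) \<and>
      (\<forall>u\<in>C0. hdist u z = hdist w z \<longrightarrow> lex_le w u)"
    then have "hdist w z = hdist m z" using m_spec by (meson le_antisym)
    then have "lex_le w m" "lex_le m w" using w m_spec by auto
    then show "w = m" by (rule lex_le_antisym)
  qed (rule m_spec)
qed

lemma
  assumes "C0 \<subseteq> {w. length w = d}" "C0 \<noteq> {}"
  shows Decode_in: "Decode C0 z \<in> C0"
    and Decode_nearest: "u \<in> C0 \<Longrightarrow> hdist (Decode C0 z) z \<le> hdist u z"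
  using theI'[OF Decode_ex1[OF assms, of z]] unfolding Decode_def by blast+

definition voting_checks :: "'r set \<Rightarrow> ('r \<Rightarrow> nat list) \<Rightarrow> bool list set \<Rightarrow> real \<Rightarrow>
    (nat \<Rightarrow> bool) \<Rightarrow> 'r set" where
  "voting_checks R nbr C0 t x = {v\<in>R. 1 \<le> loc_err nbr C0 x v \<and> real (loc_err nbr C0 x v) < t}"

definition vote :: "('r \<Rightarrow> nat list) \<Rightarrow> nat \<Rightarrow> bool list set \<Rightarrow> real \<Rightarrow> (nat \<Rightarrow> bool) \<Rightarrow> 'r \<Rightarrow> real" where
  "vote nbr c C0 t x v = (t - real (loc_err nbr C0 x v)) / (real c * t)"

definition sign_in :: "nat set \<Rightarrow> nat \<Rightarrow> real" where
  "sign_in F i = (if i \<in> F then 1 else -1)"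

lemma deter_p_eq_sum_vote:
  "deter_p R nbr c C0 t x i =
     (\<Sum>v\<in>{v\<in>voting_checks R nbr C0 t x. first_diff nbr C0 x v = i}. vote nbr c C0 t x v)"
  unfolding deter_p_def voting_checks_def vote_def by (rule sum.cong) auto

lemma sum_sign_in:
  "finite P \<Longrightarrow> (\<Sum>i\<in>P. sign_in F i) = real (card (P \<inter> F)) - real (card (P - F))"
  by (simp add: sum.Int_Diff[of P _ F] sign_in_def)

lemma sum_weighted_level_sets:
  fixes f g :: "'a \<Rightarrow> 'b::comm_semiring_1"
  assumes "finite W" "finite I" "f ` I \<subseteq> W"
  shows "(\<Sum>q\<in>W. q * (\<Sum>i\<in>{i\<in>I. f i = q}. g i)) = (\<Sum>i\<in>I. f i * g i)"
proof -
  have "(\<Sum>q\<in>W. q * (\<Sum>i\<in>{i\<in>I. f i = q}. g i)) = (\<Sum>q\<in>W. \<Sum>i\<in>{i\<in>I. f i = q}. f i * g i)"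
    by (simp add: sum_distrib_left)
  also have "\<dots> = (\<Sum>i\<in>I. f i * g i)" using assms by (intro sum.group) auto
  finally show ?thesis .
qed

lemma exists_ge_of_weighted_sum_ge:
  fixes a :: "real \<Rightarrow> real"
  assumes "finite W" "W \<noteq> {}" "\<And>q. q \<in> W \<Longrightarrow> 0 < q \<and> q \<le> 1" "card W \<le> m"
    and "0 \<le> X" "real m * X \<le> (\<Sum>q\<in>W. q * a q)"
  shows "\<exists>q\<in>W. X \<le> a q"
proof (rule ccontr)
  assume none: "\<not> ?thesis"
  have "q * a q < X" if q: "q \<in> W" for q
  proof (cases "a q \<ge> 0")
    case True
    then have "q * a q \<le> a q" using assms(3)[OF q] by (simp add: mult_left_le_one_le)
    then show ?thesis using none q by force
  next
    case False
    then show ?thesis using assms(3)[OF q] \<open>0 \<le> X\<close> by (smt (verit) mult_pos_neg)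
  qed
  then have "(\<Sum>q\<in>W. q * a q) < real (card W) * X"
    using sum_strict_mono[of W "\<lambda>q. q * a q" "\<lambda>_. X"] assms(1,2) by simp
  also have "\<dots> \<le> real m * X" using assms(4,5) by (simp add: mult_right_mono)
  finally show False using assms(6) by simp
qed

lemma Wset_eq: "Wset c d0 = (\<lambda>i. real i / real (c * d0)) ` {..c * d0}"
  by (auto simp: Wset_def)

lemma
  assumes "0 < c" "0 < d0"
  shows finite_Wset: "finite (Wset c d0)"
    and one_in_Wset: "1 \<in> Wset c d0"
    and Wset_bounds: "q \<in> Wset c d0 - {0} \<Longrightarrow> 0 < q \<and> q \<le> 1"
    and card_Wset_le: "card (Wset c d0 - {0}) \<le> c * d0"
proof -
  show "finite (Wset c d0)" by (simp add: Wset_eq)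
  have "real (c * d0) / real (c * d0) = 1" using assms by simp
  then show "1 \<in> Wset c d0" unfolding Wset_eq by (metis atMost_iff image_eqI order_refl)
  show "q \<in> Wset c d0 - {0} \<Longrightarrow> 0 < q \<and> q \<le> 1"
    using assms by (auto simp: Wset_eq) (metis of_nat_mono of_nat_mult)
  have "Wset c d0 - {0} \<subseteq> (\<lambda>i. real i / real (c * d0)) ` {1..c * d0}"
    by (auto simp: Wset_eq)
  then have "card (Wset c d0 - {0}) \<le> card {1..c * d0}"
    by (meson card_image_le card_mono finite_atLeastAtMost finite_imageI le_trans)
  then show "card (Wset c d0 - {0}) \<le> c * d0" by simp
qed

locale tanner_decoder =
  fixes n :: nat and R :: "'r set" and nbr :: "'r \<Rightarrow> nat list" and c d d0 :: nat
    and C0 :: "bool list set"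
  assumes regular: "bipartite_regular n R nbr c d"
    and linear: "linear_code d C0"
    and distance: "min_dist C0 d0"
begin

abbreviation t :: real where "t \<equiv> real d0 / 2"

lemma finite_R: "finite R" and c_pos: "0 < c"
  using regular by (auto simp: bipartite_regular_def)

lemma nbr_props: "v \<in> R \<Longrightarrow> length (nbr v) = d \<and> distinct (nbr v) \<and> set (nbr v) \<subseteq> {1..n}"
  using regular by (auto simp: bipartite_regular_def)

lemma degree: "i \<in> {1..n} \<Longrightarrow> card {v\<in>R. i \<in> set (nbr v)} = c"
  using regular by (auto simp: bipartite_regular_def)

lemma code_length: "C0 \<subseteq> {w. length w = d}" and code_nonempty: "C0 \<noteq> {}"
  using linear by (auto simp: linear_code_def)

lemma d0_pos: "0 < d0"
proof -
  obtain u w where "u \<in> C0" "w \<in> C0" "u \<noteq> w" "hdist u w = d0"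
    using distance by (auto simp: min_dist_def)
  moreover have "length u = length w" using \<open>u \<in> C0\<close> \<open>w \<in> C0\<close> code_length by auto
  ultimately show ?thesis using hdist_pos by metis
qed

lemma length_Decode: "length (Decode C0 z) = d"
  using Decode_in[OF code_length code_nonempty] code_length by auto

lemma sum_card_nbr_Int:
  assumes "F \<subseteq> {1..n}"
  shows "(\<Sum>v\<in>R. card (set (nbr v) \<inter> F)) = c * card F"
proof -
  have finF: "finite F" using assms finite_subset by blast
  have "(\<Sum>v\<in>R. card (set (nbr v) \<inter> F)) = (\<Sum>v\<in>R. \<Sum>i\<in>F. if i \<in> set (nbr v) then 1 else 0)"
    using finF by (simp add: sum.If_cases Int_commute)
  also have "\<dots> = (\<Sum>i\<in>F. \<Sum>v\<in>R. if i \<in> set (nbr v) then 1 else 0)"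
    by (rule sum.swap)
  also have "\<dots> = (\<Sum>i\<in>F. card {v\<in>R. i \<in> set (nbr v)})"
    using finite_R by (simp add: sum.If_cases Int_def conj_commute)
  also have "\<dots> = c * card F" using assms by (simp add: degree subset_iff)
  finally show ?thesis .
qed

lemma nbhd_eq: "finite F \<Longrightarrow> nbhd R nbr F = {v\<in>R. 1 \<le> card (set (nbr v) \<inter> F)}"
  by (auto simp: nbhd_def Suc_le_eq card_gt_0_iff)

lemma first_diff_spec:
  assumes "v \<in> R" "1 \<le> loc_err nbr C0 x v"
  shows "\<exists>j < length (nbr v). nbr v ! j = first_diff nbr C0 x v \<and>
           Decode C0 (local_view nbr x v) ! j \<noteq> x (nbr v ! j)"
proof -
  let ?w = "Decode C0 (local_view nbr x v)"
  let ?A = "{nbr v ! j | j. j < length (nbr v) \<and> ?w ! j \<noteq> x (nbr v ! j)}"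
  have "1 \<le> card {j. j < length ?w \<and> ?w ! j \<noteq> local_view nbr x v ! j}"
    using assms(2) by (simp add: loc_err_def hdist_def)
  then have "{j. j < length ?w \<and> ?w ! j \<noteq> local_view nbr x v ! j} \<noteq> {}"
    by (metis card.empty not_one_le_zero)
  then have "?A \<noteq> {}" using nbr_props[OF assms(1)] by (auto simp: length_Decode local_view_def)
  moreover have "finite ?A" by (rule finite_subset[of _ "set (nbr v)"]) auto
  ultimately have "Min ?A \<in> ?A" by (rule Min_in[rotated])
  then show ?thesis by (auto simp: first_diff_def)
qed

lemma first_diff_mem: "v \<in> R \<Longrightarrow> 1 \<le> loc_err nbr C0 x v \<Longrightarrow> first_diff nbr C0 x v \<in> set (nbr v)"
  using first_diff_spec by (metis nth_mem)

lemma vote_eq: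
  assumes "v \<in> voting_checks R nbr C0 t x"
  shows "vote nbr c C0 t x v = real (d0 - 2 * loc_err nbr C0 x v) / real (c * d0)"
proof -
  have "real (d0 - 2 * loc_err nbr C0 x v) = real d0 - 2 * real (loc_err nbr C0 x v)"
    using assms by (simp add: voting_checks_def)
  then show ?thesis using c_pos d0_pos by (simp add: vote_def field_simps)
qed

lemma deter_p_in_Wset:
  assumes "i \<in> {1..n}"
  shows "deter_p R nbr c C0 t x i \<in> Wset c d0"
proof -
  let ?A = "{v\<in>voting_checks R nbr C0 t x. first_diff nbr C0 x v = i}"
  have "?A \<subseteq> {v\<in>R. i \<in> set (nbr v)}"
    using first_diff_mem by (auto simp: voting_checks_def)
  then have "card ?A \<le> c" using card_mono[OF _ \<open>?A \<subseteq> _\<close>] finite_R degree[OF assms] by simp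
  have "(\<Sum>v\<in>?A. d0 - 2 * loc_err nbr C0 x v) \<le> card ?A * d0"
    using sum_bounded_above[of ?A "\<lambda>v. d0 - 2 * loc_err nbr C0 x v" d0] by (simp add: mult.commute)
  also have "\<dots> \<le> c * d0" using \<open>card ?A \<le> c\<close> by simp
  finally have "(\<Sum>v\<in>?A. d0 - 2 * loc_err nbr C0 x v) \<in> {..c * d0}" by simp
  moreover have "deter_p R nbr c C0 t x i = real (\<Sum>v\<in>?A. d0 - 2 * loc_err nbr C0 x v) / real (c * d0)"
    unfolding deter_p_eq_sum_vote of_nat_sum sum_divide_distrib by (simp add: vote_eq)
  ultimately show ?thesis unfolding Wset_eq by (rule rev_image_eqI)
qed

lemma sum_signed_card_Pset:
  "(\<Sum>q\<in>Wset c d0 - {0}. q * (real (card (Pset n R nbr c C0 t x q \<inter> F))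
       - real (card (Pset n R nbr c C0 t x q - F))))
   = (\<Sum>i\<in>{1..n}. deter_p R nbr c C0 t x i * sign_in F i)"
proof -
  have Pset_eq: "Pset n R nbr c C0 t x q = {i\<in>{1..n}. deter_p R nbr c C0 t x i = q}" for q
    by (simp add: Pset_def)
  have "(\<Sum>q\<in>Wset c d0 - {0}. q * (real (card (Pset n R nbr c C0 t x q \<inter> F))
       - real (card (Pset n R nbr c C0 t x q - F))))
     = (\<Sum>q\<in>Wset c d0. q * (\<Sum>i\<in>{i\<in>{1..n}. deter_p R nbr c C0 t x i = q}. sign_in F i))"
    using finite_Wset[OF c_pos d0_pos] by (simp add: sum_diff1 sum_sign_in Pset_eq)
  also have "\<dots> = (\<Sum>i\<in>{1..n}. deter_p R nbr c C0 t x i * sign_in F i)"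
    using finite_Wset[OF c_pos d0_pos] deter_p_in_Wset by (intro sum_weighted_level_sets) auto
  finally show ?thesis .
qed

lemma sum_deter_p_eq_sum_vote:
  "(\<Sum>i\<in>{1..n}. deter_p R nbr c C0 t x i * sign_in F i)
   = (\<Sum>v\<in>voting_checks R nbr C0 t x. vote nbr c C0 t x v * sign_in F (first_diff nbr C0 x v))"
proof -
  have "first_diff nbr C0 x ` voting_checks R nbr C0 t x \<subseteq> {1..n}"
    using first_diff_mem nbr_props by (fastforce simp: voting_checks_def)
  moreover have "finite (voting_checks R nbr C0 t x)"
    using finite_R by (simp add: voting_checks_def)
  ultimately show ?thesis
    unfolding deter_p_eq_sum_vote sum_distrib_right
    by (subst sum.group[symmetric]) (auto intro!: sum.cong)
qed

context
  fixes x y :: "nat \<Rightarrow> bool"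
  assumes codeword: "y \<in> tanner_code R nbr C0"
begin

lemma local_view_codeword: "v \<in> R \<Longrightarrow> local_view nbr y v \<in> C0"
  using codeword by (simp add: tanner_code_def)

lemma card_nbr_diffset:
  assumes "v \<in> R"
  shows "card (set (nbr v) \<inter> diffset n x y) = hdist (local_view nbr y v) (local_view nbr x v)"
proof -
  have "set (nbr v) \<inter> diffset n x y = set (nbr v) \<inter> {i. x i \<noteq> y i}"
    using nbr_props[OF assms] by (auto simp: diffset_def)
  then show ?thesis using nbr_props[OF assms] by (simp add: hdist_map_map local_view_def)
qed

lemma loc_err_le_card_nbr_diffset:
  "v \<in> R \<Longrightarrow> loc_err nbr C0 x v \<le> card (set (nbr v) \<inter> diffset n x y)"
  unfolding loc_err_def card_nbr_diffset
  by (rule Decode_nearest[OF code_length code_nonempty local_view_codeword])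

lemma min_dist_le_loc_err_add:
  assumes "v \<in> R" "Decode C0 (local_view nbr x v) \<noteq> local_view nbr y v"
  shows "d0 \<le> loc_err nbr C0 x v + card (set (nbr v) \<inter> diffset n x y)"
  unfolding loc_err_def card_nbr_diffset[OF assms(1)]
  using assms nbr_props
  by (intro min_dist_le_hdist_add[OF distance Decode_in[OF code_length code_nonempty]
        local_view_codeword]) (auto simp: length_Decode local_view_def)

lemma Decode_local_view_eq:
  assumes "v \<in> R" "real (card (set (nbr v) \<inter> diffset n x y)) < t"
  shows "Decode C0 (local_view nbr x v) = local_view nbr y v"
  using min_dist_le_loc_err_add[OF assms(1)] loc_err_le_card_nbr_diffset[OF assms(1)] assms(2)
  by fastforce

lemma gain_le_signed_vote:
  assumes v: "v \<in> R"
  defines "e \<equiv> card (set (nbr v) \<inter> diffset n x y)"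
  shows "(if 1 \<le> e then (t - real e) / (real c * t) else 0)
    \<le> (if v \<in> voting_checks R nbr C0 t x
        then vote nbr c C0 t x v * sign_in (diffset n x y) (first_diff nbr C0 x v) else 0)"
proof -
  have ct: "0 < real c * t" using c_pos d0_pos by simp
  have l_le: "loc_err nbr C0 x v \<le> e" unfolding e_def by (rule loc_err_le_card_nbr_diffset[OF v])
  consider "e = 0" | "1 \<le> e" "real e < t" | "t \<le> real e" by linarith
  then show ?thesis
  proof cases
    case 1
    then show ?thesis using l_le by (simp add: voting_checks_def)
  next
    case 2
    have dec: "Decode C0 (local_view nbr x v) = local_view nbr y v"
      using Decode_local_view_eq[OF v] 2 by (simp add: e_def)
    then have l_eq: "loc_err nbr C0 x v = e"
      by (simp add: loc_err_def e_def card_nbr_diffset[OF v])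
    then have vS: "v \<in> voting_checks R nbr C0 t x" using v 2 by (simp add: voting_checks_def)
    obtain j where j: "j < length (nbr v)" "nbr v ! j = first_diff nbr C0 x v"
      "Decode C0 (local_view nbr x v) ! j \<noteq> x (nbr v ! j)"
      using first_diff_spec[where x = x, OF v] 2 l_eq by auto
    moreover have "y (nbr v ! j) \<noteq> x (nbr v ! j)" using j dec by (simp add: local_view_def)
    moreover have "nbr v ! j \<in> {1..n}" using j(1) nbr_props[OF v] nth_mem by blast
    ultimately have "first_diff nbr C0 x v \<in> diffset n x y" by (auto simp: diffset_def)
    then show ?thesis using 2 vS l_eq by (simp add: vote_def sign_in_def)
  next
    case 3
    then have gain_nonpos: "(t - real e) / (real c * t) \<le> 0"
      using ct by (simp add: divide_nonpos_pos)
    show ?thesis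
    proof (cases "v \<in> voting_checks R nbr C0 t x")
      case vS: True
      have "1 \<le> e" using 3 d0_pos by (simp add: Suc_le_eq)
      have vote_nonneg: "0 \<le> vote nbr c C0 t x v"
        using vS ct by (simp add: vote_def voting_checks_def)
      have "Decode C0 (local_view nbr x v) \<noteq> local_view nbr y v"
        using vS 3 by (auto simp: voting_checks_def loc_err_def e_def card_nbr_diffset[OF v])
      then have "real d0 \<le> real (loc_err nbr C0 x v) + real e"
        using min_dist_le_loc_err_add[OF v] unfolding e_def by linarith
      then have "(t - real e) / (real c * t) \<le> (real (loc_err nbr C0 x v) - t) / (real c * t)"
        using ct by (simp add: divide_right_mono)
      also have "\<dots> = - vote nbr c C0 t x v"
        unfolding vote_def by (metis minus_diff_eq minus_divide_left)
      also have "\<dots> \<le> vote nbr c C0 t x v * sign_in (diffset n x y) (first_diff nbr C0 x v)"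
        using vote_nonneg by (simp add: sign_in_def)
      finally show ?thesis using vS \<open>1 \<le> e\<close> by simp
    qed (use gain_nonpos in simp)
  qed
qed

lemma sum_signed_vote_ge:
  defines "F \<equiv> diffset n x y"
  shows "(t * real (card (nbhd R nbr F)) - real (c * card F)) / (real c * t)
    \<le> (\<Sum>v\<in>voting_checks R nbr C0 t x. vote nbr c C0 t x v * sign_in F (first_diff nbr C0 x v))"
proof -
  let ?e = "\<lambda>v. card (set (nbr v) \<inter> F)"
  have F_sub: "F \<subseteq> {1..n}" and "finite F" by (auto simp: F_def diffset_def)
  have "(\<Sum>v\<in>nbhd R nbr F. real (?e v)) = (\<Sum>v\<in>R. real (?e v))"
    using finite_R \<open>finite F\<close> by (intro sum.mono_neutral_left) (auto simp: nbhd_eq Suc_le_eq card_gt_0_iff)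
  also have "\<dots> = real (c * card F)" using sum_card_nbr_Int[OF F_sub] by (metis of_nat_sum)
  finally have sum_e: "(\<Sum>v\<in>nbhd R nbr F. real (?e v)) = real (c * card F)" .
  have "(t * real (card (nbhd R nbr F)) - real (c * card F)) / (real c * t)
      = (\<Sum>v\<in>nbhd R nbr F. (t - real (?e v)) / (real c * t))"
    unfolding sum_divide_distrib[symmetric] sum_subtractf sum_e by simp
  also have "\<dots> = (\<Sum>v\<in>R. if 1 \<le> ?e v then (t - real (?e v)) / (real c * t) else 0)"
    using finite_R \<open>finite F\<close> by (simp add: sum.If_cases nbhd_eq Int_def conj_commute)
  also have "\<dots> \<le> (\<Sum>v\<in>R. if v \<in> voting_checks R nbr C0 t x
        then vote nbr c C0 t x v * sign_in F (first_diff nbr C0 x v) else 0)"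
    unfolding F_def by (intro sum_mono gain_le_signed_vote)
  also have "\<dots> = (\<Sum>v\<in>voting_checks R nbr C0 t x. vote nbr c C0 t x v * sign_in F (first_diff nbr C0 x v))"
    using finite_R by (simp add: sum.If_cases Int_def voting_checks_def)
  finally show ?thesis .
qed

end

end

theorem lemma4p1:
  fixes n c d d0 :: nat and R :: "'r set" and nbr :: "'r \<Rightarrow> nat list"
    and \<alpha> \<delta> :: real and C0 :: "bool list set" and x y :: "nat \<Rightarrow> bool"
  assumes "real d0 * \<delta> > 2"
    and "bip_expander n R nbr c d \<alpha> \<delta>"
    and "linear_code d C0" and "min_dist C0 d0"
    and "y \<in> tanner_code R nbr C0"
    and "real (card (diffset n x y)) \<le> \<alpha> * real n"
  shows "\<exists>q \<in> Wset c d0 - {0}.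
     real (card (Pset n R nbr c C0 (real d0 / 2) x q \<inter> diffset n x y))
       - real (card (Pset n R nbr c C0 (real d0 / 2) x q - diffset n x y))
     \<ge> (real d0 / 2 - 1 / \<delta>) * \<delta> / (2 * real c * (real d0 / 2)^2) * real (card (diffset n x y))"
proof -
  interpret tanner_decoder n R nbr c d d0 C0
    using assms(2-4) by unfold_locales (simp_all add: bip_expander_def)
  define F where "F = diffset n x y"
  define X where "X = (t - 1 / \<delta>) * \<delta> / (2 * real c * t\<^sup>2) * real (card F)"
  have \<delta>_pos: "0 < \<delta>" using assms(2) by (simp add: bip_expander_def)
  have "F \<subseteq> {1..n}" by (auto simp: F_def diffset_def)
  then have expansion: "\<delta> * real c * real (card F) \<le> real (card (nbhd R nbr F))"
    using assms(2,6) unfolding bip_expander_def F_def by blast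
  have "real (c * d0) * X = (t * (\<delta> * real c * real (card F)) - real (c * card F)) / (real c * t)"
    using c_pos d0_pos \<delta>_pos by (simp add: X_def field_simps power2_eq_square)
  also have "\<dots> \<le> (t * real (card (nbhd R nbr F)) - real (c * card F)) / (real c * t)"
    using expansion c_pos d0_pos by (simp add: divide_right_mono)
  also have "\<dots> \<le> (\<Sum>v\<in>voting_checks R nbr C0 t x. vote nbr c C0 t x v * sign_in F (first_diff nbr C0 x v))"
    unfolding F_def by (rule sum_signed_vote_ge[OF assms(5)])
  also have "\<dots> = (\<Sum>q\<in>Wset c d0 - {0}. q * (real (card (Pset n R nbr c C0 t x q \<inter> F))
       - real (card (Pset n R nbr c C0 t x q - F))))"
    by (simp only: sum_signed_card_Pset sum_deter_p_eq_sum_vote)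
  finally have weighted: "real (c * d0) * X \<le> \<dots>" .
  have "1 / \<delta> < t" using assms(1) \<delta>_pos by (simp add: field_simps)
  then have "0 \<le> X" using \<delta>_pos c_pos by (simp add: X_def)
  then have "\<exists>q\<in>Wset c d0 - {0}.
      X \<le> real (card (Pset n R nbr c C0 t x q \<inter> F)) - real (card (Pset n R nbr c C0 t x q - F))"
    using finite_Wset[OF c_pos d0_pos] one_in_Wset[OF c_pos d0_pos] Wset_bounds[OF c_pos d0_pos]
    by (intro exists_ge_of_weighted_sum_ge[OF _ _ _ card_Wset_le[OF c_pos d0_pos] _ weighted]) auto
  then show ?thesis unfolding X_def F_def .
qed

end
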